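(* Let $\mathbf{h}_1,\mathbf{h}_2\in\mathbb{C}^M$ be linearly independent, $P,\sigma^2>0$, $\rho=\|\mathbf{h}_1\|^2/\|\mathbf{h}_2\|^2$, and $\varphi\in(0,\pi/2]$ the Hermitian angle defined by $\cos\varphi=\frac{|\mathbf{h}_1^H\mathbf{h}_2|}{\|\mathbf{h}_1\|\|\mathbf{h}_2\|}$. Let $\nu(\rho,\varphi)=10\log_{10}\frac{\mathrm{SNR}_{\rm md}}{\mathrm{SNR}_{\rm zf}}$. Then: (1) if $0<\rho\le1$ and $0\le\cos\varphi\le\sqrt\rho$: $\nu=10\log_{10}\frac{1+\rho}{1+\rho-2\sqrt\rho\cos\varphi}$; (2) if $0<\rho\le1$ and $\sqrt\rho<\cos\varphi<1$: $\nu=10\log_{10}\frac{1+\rho}{1-\cos^2\varphi}$; (3) if $\rho>1$ and $0\le\cos\varphi\le1/\sqrt\rho$: $\nu=10\log_{10}\frac{1+\rho}{1+\rho-2\sqrt\rho\cos\varphi}$; (4) if $\rho>1$ and $1/\sqrt\rho<\cos\varphi<1$: $\nu=10\log_{10}\frac{1+1/\rho}{1-\cos^2\varphi}$.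
   Context: With $\mathbf{H}=[\mathbf{h}_1\ \mathbf{h}_2]$ and $\mu_1,\mu_2$ the eigenvalues of $\mathbf{H}^H\mathbf{H}$: $\mathrm{SNR}_{\rm zf}=\frac{P}{\sigma^2\sum_{i=1}^2[(\mathbf{H}^H\mathbf{H})^{-1}]_{i,i}}=\frac{P\mu_1\mu_2}{\sigma^2(\mu_1+\mu_2)}$, and $\mathrm{SNR}_{\rm md}=\frac{1}{\sigma^2}\max_{\mathbf{w}\in\mathbb{C}^M,\ \|\mathbf{w}\|^2=P}\min\{|\mathbf{h}_1^H\mathbf{w}|^2,|\mathbf{h}_2^H\mathbf{w}|^2\}$. *)

theory Defs
  imports "HOL-Analysis.Analysis"
begin

text \<open>Hermitian inner product h^H w on C^M (vectors complex ^ 'm, M = CARD('m)).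
  The library norm on complex ^ 'm is the Euclidean (L2) norm.\<close>
definition cinner :: "complex ^ 'm \<Rightarrow> complex ^ 'm \<Rightarrow> complex" where
  "cinner h w = (\<Sum>i\<in>UNIV. cnj (h $ i) * w $ i)"

definition clin_indep2 :: "complex ^ 'm \<Rightarrow> complex ^ 'm \<Rightarrow> bool" where
  "clin_indep2 h1 h2 \<longleftrightarrow> (\<forall>a b :: complex. a *s h1 + b *s h2 = 0 \<longrightarrow> a = 0 \<and> b = 0)"

text \<open>Columns of H = [h1 h2] and the Gram matrix H^H H (2 x 2).\<close>
definition col2 :: "complex ^ 'm \<Rightarrow> complex ^ 'm \<Rightarrow> 2 \<Rightarrow> complex ^ 'm" where
  "col2 h1 h2 i = (if i = 1 then h1 else h2)"

definition gram2 :: "complex ^ 'm \<Rightarrow> complex ^ 'm \<Rightarrow> complex ^ 2 ^ 2" where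
  "gram2 h1 h2 = (\<chi> i j. cinner (col2 h1 h2 i) (col2 h1 h2 j))"

definition SNR_zf :: "real \<Rightarrow> real \<Rightarrow> complex ^ 'm \<Rightarrow> complex ^ 'm \<Rightarrow> real" where
  "SNR_zf P \<sigma>2 h1 h2 =
     P / (\<sigma>2 * Re (\<Sum>i\<in>UNIV. matrix_inv (gram2 h1 h2) $ i $ i))"

definition SNR_md :: "real \<Rightarrow> real \<Rightarrow> complex ^ 'm \<Rightarrow> complex ^ 'm \<Rightarrow> real" where
  "SNR_md P \<sigma>2 h1 h2 =
     (1 / \<sigma>2) * Sup {min ((cmod (cinner h1 w))\<^sup>2) ((cmod (cinner h2 w))\<^sup>2) | w. (norm w)\<^sup>2 = P}"

definition herm_angle :: "complex ^ 'm \<Rightarrow> complex ^ 'm \<Rightarrow> real" where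
  "herm_angle h1 h2 = arccos (cmod (cinner h1 h2) / (norm h1 * norm h2))"

definition nu_gap :: "real \<Rightarrow> real \<Rightarrow> complex ^ 'm \<Rightarrow> complex ^ 'm \<Rightarrow> real" where
  "nu_gap P \<sigma>2 h1 h2 = 10 * log 10 (SNR_md P \<sigma>2 h1 h2 / SNR_zf P \<sigma>2 h1 h2)"

end

theory Submission
  imports Defs
begin

text \<open>Write \<open>a = \<parallel>h1\<parallel>\<^sup>2\<close>, \<open>b = \<parallel>h2\<parallel>\<^sup>2\<close>, \<open>c = \<bar>h1\<^sup>H h2\<bar>\<close> and \<open>D = a b - c\<^sup>2\<close>,
  which is positive by linear independence. Inverting the \<open>2 \<times> 2\<close> Gram matrix gives
  \<open>SNR_zf = P D / (\<sigma>\<^sup>2 (a + b))\<close>. For max-min beamforming put \<open>m\<^sub>i = \<bar>h\<^sub>i\<^sup>H w\<bar>\<close>; projecting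
  \<open>w\<close> onto the span of \<open>h1, h2\<close> gives \<open>b m\<^sub>1\<^sup>2 + a m\<^sub>2\<^sup>2 - 2 c m\<^sub>1 m\<^sub>2 \<le> D \<parallel>w\<parallel>\<^sup>2\<close>.
  When \<open>c \<le> min a b\<close>, this quadratic form is smallest on the diagonal among all
  \<open>m\<^sub>1, m\<^sub>2 \<ge> min m\<^sub>1 m\<^sub>2\<close>, so \<open>min m\<^sub>1\<^sup>2 m\<^sub>2\<^sup>2 \<le> P D / (a + b - 2 c)\<close>, with equality for the
  vector of the span that gives both users the same gain. When \<open>a \<le> c\<close>, the matched
  filter \<open>w \<sim> h1\<close> already attains the single-user bound \<open>P a\<close>, and symmetrically for
  \<open>b \<le> c\<close>. As \<open>\<rho> = a / b\<close> and \<open>cos \<phi> = c / \<surd>(a b)\<close>, the four cases of the theorem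
  are exactly these three regimes.\<close>

lemma cinner_self: "cinner u u = complex_of_real ((norm u)\<^sup>2)"
proof -
  have "(norm u)\<^sup>2 = (\<Sum>i\<in>UNIV. (cmod (u $ i))\<^sup>2)"
    by (simp add: norm_vec_def L2_set_def sum_nonneg)
  moreover have "cnj (u $ i) * u $ i = complex_of_real ((cmod (u $ i))\<^sup>2)" for i
    by (metis complex_norm_square mult.commute)
  ultimately show ?thesis
    unfolding cinner_def of_real_sum by simp
qed

lemma cinner_commute: "cinner v u = cnj (cinner u v)"
  unfolding cinner_def by (simp add: mult.commute)

lemma cinner_lincomb_right:
  "cinner h (\<alpha> *s u + \<beta> *s v) = \<alpha> * cinner h u + \<beta> * cinner h v"
  unfolding cinner_def by (simp add: sum_distrib_left sum.distrib algebra_simps)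

lemma cinner_lincomb_left:
  "cinner (\<alpha> *s u + \<beta> *s v) w = cnj \<alpha> * cinner u w + cnj \<beta> * cinner v w"
  unfolding cinner_def by (simp add: sum_distrib_left sum.distrib algebra_simps)

lemma norm_cinner_le: "cmod (cinner u v) \<le> norm u * norm v"
proof -
  have "cmod (cinner u v) \<le> (\<Sum>i\<in>UNIV. cmod (u $ i) * cmod (v $ i))"
    unfolding cinner_def by (rule order_trans[OF norm_sum]) (simp add: norm_mult)
  also have "\<dots> = (\<chi> i. cmod (u $ i)) \<bullet> (\<chi> i. cmod (v $ i))"
    by (simp add: inner_vec_def)
  also have "\<dots> \<le> norm (\<chi> i. cmod (u $ i)) * norm (\<chi> i. cmod (v $ i))"
    by (rule norm_cauchy_schwarz)
  also have "\<dots> = norm u * norm v"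
    by (simp add: norm_vec_def)
  finally show ?thesis .
qed

lemma norm_cinner_sq_le: "(cmod (cinner u v))\<^sup>2 \<le> (norm u)\<^sup>2 * (norm v)\<^sup>2"
proof -
  have "(cmod (cinner u v))\<^sup>2 \<le> (norm u * norm v)\<^sup>2"
    by (rule power_mono[OF norm_cinner_le]) simp
  then show ?thesis by (simp add: power_mult_distrib)
qed

lemma norm_lincomb_sq:
  "(norm (\<alpha> *s u + \<beta> *s v))\<^sup>2 =
     Re (cnj \<alpha> * (\<alpha> * cinner u u + \<beta> * cinner u v) + cnj \<beta> * (\<alpha> * cinner v u + \<beta> * cinner v v))"
proof -
  have "complex_of_real ((norm (\<alpha> *s u + \<beta> *s v))\<^sup>2) =
      cinner (\<alpha> *s u + \<beta> *s v) (\<alpha> *s u + \<beta> *s v)"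
    by (rule cinner_self[symmetric])
  also have "\<dots> = cnj \<alpha> * (\<alpha> * cinner u u + \<beta> * cinner u v) + cnj \<beta> * (\<alpha> * cinner v u + \<beta> * cinner v v)"
    by (simp add: cinner_lincomb_left cinner_lincomb_right algebra_simps)
  finally show ?thesis
    by (metis Re_complex_of_real)
qed

text \<open>With \<open>Q\<close> the left-hand side, \<open>Q / D\<close> is the squared norm of the orthogonal projection of
  \<open>w\<close> onto the span of \<open>h1, h2\<close>; the proof applies Cauchy--Schwarz to \<open>w\<close> and the vector
  \<open>v\<close> of that span with \<open>cinner v w = Q\<close> and \<open>(norm v)\<^sup>2 = D * Q\<close>.\<close>
lemma cinner_projection_bound:
  fixes h1 h2 w :: "complex ^ 'm"
  defines "a \<equiv> (norm h1)\<^sup>2" and "b \<equiv> (norm h2)\<^sup>2" and "g \<equiv> cinner h1 h2"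
  shows "b * (cmod (cinner h1 w))\<^sup>2 + a * (cmod (cinner h2 w))\<^sup>2
           - 2 * Re (g * cnj (cinner h1 w) * cinner h2 w)
         \<le> (a * b - (cmod g)\<^sup>2) * (norm w)\<^sup>2"
proof -
  define x y where "x = cinner h1 w" and "y = cinner h2 w"
  define D where "D = a * b - (cmod g)\<^sup>2"
  define Q where "Q = b * (cmod x)\<^sup>2 + a * (cmod y)\<^sup>2 - 2 * Re (g * cnj x * y)"
  define v where "v = (of_real b * x - g * y) *s h1 + (of_real a * y - cnj g * x) *s h2"
  have gram: "cinner h1 h1 = of_real a" "cinner h2 h2 = of_real b" "cinner h2 h1 = cnj g"
    "cinner h1 h2 = g"
    by (simp_all add: a_def b_def g_def cinner_self cinner_commute[of h2])
  have "cinner v w = of_real Q"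
    unfolding v_def cinner_lincomb_left x_def[symmetric] y_def[symmetric] Q_def cmod_power2
    by (simp add: complex_eq_iff algebra_simps power2_eq_square)
  moreover have "(norm v)\<^sup>2 = D * Q"
    unfolding v_def norm_lincomb_sq gram D_def Q_def cmod_power2
    by (simp add: power2_eq_square; algebra)
  ultimately have "Q\<^sup>2 \<le> D * Q * (norm w)\<^sup>2"
    using norm_cinner_sq_le[of v w] by simp
  moreover have "0 \<le> D"
    using norm_cinner_sq_le[of h1 h2] by (simp add: D_def a_def b_def g_def)
  ultimately have "Q \<le> D * (norm w)\<^sup>2"
    by (cases "Q > 0")
      (auto simp: power2_eq_square mult_le_cancel_right intro: order_trans[OF _ mult_nonneg_nonneg])
  then show ?thesis
    unfolding Q_def D_def x_def y_def .
qed

lemma clin_indep2_commute: "clin_indep2 h1 h2 \<longleftrightarrow> clin_indep2 h2 h1"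
  unfolding clin_indep2_def by (metis add.commute)

lemma clin_indep2_nonzero:
  assumes "clin_indep2 h1 h2"
  shows "h1 \<noteq> 0" and "h2 \<noteq> 0"
proof -
  have "(1::complex) *s h1 + 0 *s h2 \<noteq> 0" and "(0::complex) *s h1 + 1 *s h2 \<noteq> 0"
    using assms unfolding clin_indep2_def by (metis zero_neq_one)+
  then show "h1 \<noteq> 0" and "h2 \<noteq> 0"
    by auto
qed

lemma clin_indep2_gram_det_pos:
  assumes "clin_indep2 h1 h2"
  shows "(cmod (cinner h1 h2))\<^sup>2 < (norm h1)\<^sup>2 * (norm h2)\<^sup>2"
proof -
  define a g where "a = (norm h1)\<^sup>2" and "g = cinner h1 h2"
  have a: "a > 0" using clin_indep2_nonzero(1)[OF assms] by (simp add: a_def)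
  have "(-g) *s h1 + complex_of_real a *s h2 \<noteq> 0"
    using assms a unfolding clin_indep2_def by fastforce
  then have "0 < (norm ((-g) *s h1 + complex_of_real a *s h2))\<^sup>2"
    by simp
  also have "\<dots> = a * (a * (norm h2)\<^sup>2 - (cmod g)\<^sup>2)"
    unfolding norm_lincomb_sq cinner_self cinner_commute[of h2 h1] g_def[symmetric] a_def[symmetric]
      cmod_power2
    by (simp add: power2_eq_square; algebra)
  finally show ?thesis
    using a by (simp add: zero_less_mult_iff a_def g_def)
qed

lemma clin_indep2_cross_lt:
  assumes "clin_indep2 h1 h2"
  shows "2 * cmod (cinner h1 h2) < (norm h1)\<^sup>2 + (norm h2)\<^sup>2"
proof -
  have "(2 * cmod (cinner h1 h2))\<^sup>2 < 4 * ((norm h1)\<^sup>2 * (norm h2)\<^sup>2)"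
    using clin_indep2_gram_det_pos[OF assms] by (simp add: power_mult_distrib)
  also have "\<dots> \<le> ((norm h1)\<^sup>2 + (norm h2)\<^sup>2)\<^sup>2"
    using sum_squares_ge_zero[of "(norm h1)\<^sup>2 - (norm h2)\<^sup>2" 0]
    by (simp add: power2_eq_square algebra_simps)
  finally show ?thesis
    by (rule power2_less_imp_less) simp
qed

lemma matrix_inv_eqI:
  fixes A :: "'a::comm_ring_1 ^ 'n ^ 'n"
  assumes "A ** B = mat 1" and "B ** A = mat 1"
  shows "matrix_inv A = B"
proof -
  let ?C = "matrix_inv A"
  have C: "A ** ?C = mat 1 \<and> ?C ** A = mat 1"
    unfolding matrix_inv_def by (rule someI[of _ B]) (use assms in simp)
  have "?C = ?C ** (A ** B)" using assms by (simp add: matrix_mul_rid)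
  also have "\<dots> = (?C ** A) ** B" by (simp add: matrix_mul_assoc)
  also have "\<dots> = B" using C by (simp add: matrix_mul_lid)
  finally show ?thesis .
qed

lemma trace_matrix_inv_2:
  fixes A :: "'a::field ^ 2 ^ 2"
  defines "d \<equiv> A$1$1 * A$2$2 - A$1$2 * A$2$1"
  assumes "d \<noteq> 0"
  shows "(\<Sum>i\<in>UNIV. matrix_inv A $ i $ i) = (A$1$1 + A$2$2) / d"
proof -
  define B :: "'a ^ 2 ^ 2" where
    "B = (\<chi> i j. if i = 1 \<and> j = 1 then A$2$2 / d else if i = 1 \<and> j = 2 then - A$1$2 / d
                  else if i = 2 \<and> j = 1 then - A$2$1 / d else A$1$1 / d)"
  have B: "B$1$1 = A$2$2 / d" "B$1$2 = - A$1$2 / d" "B$2$1 = - A$2$1 / d" "B$2$2 = A$1$1 / d"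
    by (simp_all add: B_def)
  have "A ** B = mat 1"
    unfolding vec_eq_iff forall_2 matrix_matrix_mult_def mat_def
    using assms(2) by (simp add: sum_2 B field_simps; simp add: d_def algebra_simps)
  moreover have "B ** A = mat 1"
    unfolding vec_eq_iff forall_2 matrix_matrix_mult_def mat_def
    using assms(2) by (simp add: sum_2 B field_simps; simp add: d_def algebra_simps)
  ultimately have "matrix_inv A = B" by (rule matrix_inv_eqI)
  then show ?thesis by (simp add: sum_2 B add_divide_distrib)
qed

lemma SNR_zf_eq:
  assumes "clin_indep2 h1 h2"
  shows "SNR_zf P \<sigma>2 h1 h2 =
    P * ((norm h1)\<^sup>2 * (norm h2)\<^sup>2 - (cmod (cinner h1 h2))\<^sup>2) / (\<sigma>2 * ((norm h1)\<^sup>2 + (norm h2)\<^sup>2))"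
proof -
  define a b g D where "a = (norm h1)\<^sup>2" and "b = (norm h2)\<^sup>2" and "g = cinner h1 h2"
    and "D = a * b - (cmod g)\<^sup>2"
  have D: "D > 0" using clin_indep2_gram_det_pos[OF assms] by (simp add: D_def a_def b_def g_def)
  have G: "gram2 h1 h2 $ 1 $ 1 = of_real a" "gram2 h1 h2 $ 1 $ 2 = g"
    "gram2 h1 h2 $ 2 $ 1 = cnj g" "gram2 h1 h2 $ 2 $ 2 = of_real b"
    by (simp_all add: gram2_def col2_def a_def b_def g_def cinner_self cinner_commute[of h2])
  have det: "of_real a * of_real b - g * cnj g = complex_of_real D"
    by (simp add: D_def complex_norm_square[symmetric])
  have "(\<Sum>i\<in>UNIV. matrix_inv (gram2 h1 h2) $ i $ i) = complex_of_real ((a + b) / D)"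
    using trace_matrix_inv_2[of "gram2 h1 h2"] D unfolding G det by simp
  then show ?thesis
    unfolding SNR_zf_def a_def[symmetric] b_def[symmetric] g_def[symmetric] D_def[symmetric]
    using D by simp
qed

lemma SNR_md_eqI:
  assumes "(norm w0)\<^sup>2 = P" and "min ((cmod (cinner h1 w0))\<^sup>2) ((cmod (cinner h2 w0))\<^sup>2) = V"
    and "\<And>w. (norm w)\<^sup>2 = P \<Longrightarrow> min ((cmod (cinner h1 w))\<^sup>2) ((cmod (cinner h2 w))\<^sup>2) \<le> V"
  shows "SNR_md P \<sigma>2 h1 h2 = V / \<sigma>2"
proof -
  have "Sup {min ((cmod (cinner h1 w))\<^sup>2) ((cmod (cinner h2 w))\<^sup>2) | w. (norm w)\<^sup>2 = P} = V"
    by (rule cSup_eq_maximum) (use assms in auto)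
  then show ?thesis
    unfolding SNR_md_def by simp
qed

lemma SNR_md_commute: "SNR_md P \<sigma>2 h1 h2 = SNR_md P \<sigma>2 h2 h1"
  unfolding SNR_md_def by (simp add: min.commute)

lemma quadratic_form_ge_diagonal:
  fixes a b c r m1 m2 :: real
  assumes "0 \<le> c" "c \<le> a" "c \<le> b" "0 \<le> r" "r \<le> m1" "r \<le> m2"
  shows "r\<^sup>2 * (a + b - 2 * c) \<le> b * m1\<^sup>2 + a * m2\<^sup>2 - 2 * c * m1 * m2"
proof -
  define p q where "p = m1 - r" and "q = m2 - r"
  have "b * m1\<^sup>2 + a * m2\<^sup>2 - 2 * c * m1 * m2 - r\<^sup>2 * (a + b - 2 * c)
      = 2 * r * p * (b - c) + 2 * r * q * (a - c) + (b - c) * p\<^sup>2 + (a - c) * q\<^sup>2 + c * (p - q)\<^sup>2"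
    by (simp add: p_def q_def algebra_simps power2_eq_square)
  moreover have
    "0 \<le> 2 * r * p * (b - c) + 2 * r * q * (a - c) + (b - c) * p\<^sup>2 + (a - c) * q\<^sup>2 + c * (p - q)\<^sup>2"
    using assms by (intro add_nonneg_nonneg mult_nonneg_nonneg) (auto simp: p_def q_def)
  ultimately show ?thesis by linarith
qed

lemma min_cinner_sq_le_balanced:
  fixes h1 h2 w :: "complex ^ 'm"
  defines "a \<equiv> (norm h1)\<^sup>2" and "b \<equiv> (norm h2)\<^sup>2" and "c \<equiv> cmod (cinner h1 h2)"
  assumes "c \<le> a" "c \<le> b" "2 * c < a + b"
  shows "min ((cmod (cinner h1 w))\<^sup>2) ((cmod (cinner h2 w))\<^sup>2)
           \<le> (norm w)\<^sup>2 * (a * b - c\<^sup>2) / (a + b - 2 * c)"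
proof -
  define m1 m2 where "m1 = cmod (cinner h1 w)" and "m2 = cmod (cinner h2 w)"
  have "Re (cinner h1 h2 * cnj (cinner h1 w) * cinner h2 w) \<le> c * m1 * m2"
    using complex_Re_le_cmod[of "cinner h1 h2 * cnj (cinner h1 w) * cinner h2 w"]
    by (simp add: c_def m1_def m2_def norm_mult)
  moreover have "b * m1\<^sup>2 + a * m2\<^sup>2 - 2 * Re (cinner h1 h2 * cnj (cinner h1 w) * cinner h2 w)
      \<le> (a * b - c\<^sup>2) * (norm w)\<^sup>2"
    unfolding a_def b_def c_def m1_def m2_def by (rule cinner_projection_bound)
  ultimately have "b * m1\<^sup>2 + a * m2\<^sup>2 - 2 * c * m1 * m2 \<le> (a * b - c\<^sup>2) * (norm w)\<^sup>2"
    by linarith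
  moreover have "(min m1 m2)\<^sup>2 * (a + b - 2 * c) \<le> b * m1\<^sup>2 + a * m2\<^sup>2 - 2 * c * m1 * m2"
    using assms by (intro quadratic_form_ge_diagonal) (auto simp: c_def m1_def m2_def)
  moreover have "min (m1\<^sup>2) (m2\<^sup>2) = (min m1 m2)\<^sup>2"
    by (simp add: m1_def m2_def min_def power_mono)
  ultimately show ?thesis
    using assms(6) by (simp add: m1_def m2_def pos_le_divide_eq mult.commute)
qed

lemma SNR_md_balanced:
  fixes h1 h2 :: "complex ^ 'm"
  defines "a \<equiv> (norm h1)\<^sup>2" and "b \<equiv> (norm h2)\<^sup>2" and "c \<equiv> cmod (cinner h1 h2)"
  assumes indep: "clin_indep2 h1 h2" and P: "0 \<le> P" and "c \<le> a" "c \<le> b"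
  shows "SNR_md P \<sigma>2 h1 h2 = P * (a * b - c\<^sup>2) / (a + b - 2 * c) / \<sigma>2"
proof -
  define g where "g = cinner h1 h2"
  define D where "D = a * b - c\<^sup>2"
  have D: "D > 0" and abc: "2 * c < a + b"
    using clin_indep2_gram_det_pos[OF indep] clin_indep2_cross_lt[OF indep]
    by (simp_all add: D_def a_def b_def c_def)
  \<comment> \<open>The witness is the vector of the span with gains \<open>k D\<close> and \<open>k D u\<close>, where \<open>u\<close> is the
    phase of \<open>cnj g\<close>; since both have modulus \<open>k D\<close>, the minimum of the two is attained.\<close>
  define u where "u = cis (- Arg g)"
  have gu: "g = of_real c * cnj u" and uu: "u * (cnj u * z) = z" for z
    by (simp_all add: u_def c_def g_def cis_cnj rcis_def[symmetric] rcis_cmod_Arg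
        mult.assoc[symmetric] cis_mult)
  define k where "k = sqrt (P / (D * (a + b - 2 * c)))"
  have k2: "k\<^sup>2 * (D * (a + b - 2 * c)) = P"
    using P D abc by (simp add: k_def)
  define w where
    "w = complex_of_real (k * (b - c)) *s h1 + (complex_of_real (k * (a - c)) * u) *s h2"
  have gram: "cinner h1 h1 = of_real a" "cinner h2 h2 = of_real b"
    "cinner h2 h1 = cnj g" "cinner h1 h2 = g"
    by (simp_all add: a_def b_def g_def cinner_self cinner_commute[of h2])
  have x: "cinner h1 w = of_real (k * D)"
    unfolding w_def cinner_lincomb_right gram gu D_def
    by (simp add: algebra_simps power2_eq_square uu)
  have y: "cinner h2 w = of_real (k * D) * u"
    unfolding w_def cinner_lincomb_right gram gu D_def
    by (simp add: algebra_simps power2_eq_square uu)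
  have kD: "(k * D)\<^sup>2 = P * D / (a + b - 2 * c)"
    unfolding k2[symmetric] using abc D by (simp add: power2_eq_square)
  have "(norm w)\<^sup>2 = k\<^sup>2 * D * (a + b - 2 * c)"
    unfolding w_def norm_lincomb_sq gram gu D_def
    by (simp add: algebra_simps power2_eq_square uu)
  then have "(norm w)\<^sup>2 = P"
    using k2 by (simp add: mult.assoc)
  moreover have "(cmod (cinner h1 w))\<^sup>2 = P * D / (a + b - 2 * c)"
    and "(cmod (cinner h2 w))\<^sup>2 = P * D / (a + b - 2 * c)"
    using kD by (simp_all add: x y norm_mult u_def power_mult_distrib)
  moreover have "min ((cmod (cinner h1 v))\<^sup>2) ((cmod (cinner h2 v))\<^sup>2) \<le> P * D / (a + b - 2 * c)"
    if "(norm v)\<^sup>2 = P" for v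
    using min_cinner_sq_le_balanced[where w = v] that assms abc
    by (simp add: a_def b_def c_def D_def)
  ultimately show ?thesis
    unfolding D_def by (intro SNR_md_eqI[of w]) simp_all
qed

lemma SNR_md_single:
  fixes h1 h2 :: "complex ^ 'm"
  assumes "h1 \<noteq> 0" and P: "0 \<le> P" and "(norm h1)\<^sup>2 \<le> cmod (cinner h1 h2)"
  shows "SNR_md P \<sigma>2 h1 h2 = P * (norm h1)\<^sup>2 / \<sigma>2"
proof -
  define a c where "a = (norm h1)\<^sup>2" and "c = cmod (cinner h1 h2)"
  have a: "a > 0" using assms(1) by (simp add: a_def)
  define k where "k = sqrt (P / a)"
  have k2: "k\<^sup>2 * a = P" using P a by (simp add: k_def)
  define w where "w = complex_of_real k *s h1 + 0 *s h2"
  have "(norm w)\<^sup>2 = P"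
    unfolding w_def norm_lincomb_sq cinner_self a_def[symmetric] using k2
    by (simp add: power2_eq_square)
  moreover have "(cmod (cinner h1 w))\<^sup>2 = P * a"
    unfolding w_def cinner_lincomb_right cinner_self a_def[symmetric] using k2 a
    by (simp add: norm_mult power2_eq_square)
  moreover have "P * a \<le> (cmod (cinner h2 w))\<^sup>2"
  proof -
    have "a \<le> c"
      using assms(3) by (simp add: a_def c_def)
    then have "a\<^sup>2 \<le> c\<^sup>2"
      using a by (simp add: power_mono)
    then have "k\<^sup>2 * a\<^sup>2 \<le> k\<^sup>2 * c\<^sup>2"
      by (simp add: mult_left_mono)
    moreover have "P * a = k\<^sup>2 * a\<^sup>2"
      unfolding k2[symmetric] by (simp add: power2_eq_square)
    ultimately have "P * a \<le> k\<^sup>2 * c\<^sup>2"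
      by simp
    then show ?thesis
      unfolding w_def cinner_lincomb_right cinner_commute[of h2 h1] c_def
      by (simp add: norm_mult power_mult_distrib)
  qed
  moreover have "min ((cmod (cinner h1 v))\<^sup>2) ((cmod (cinner h2 v))\<^sup>2) \<le> P * a"
    if "(norm v)\<^sup>2 = P" for v
    using norm_cinner_sq_le[of h1 v] that by (simp add: a_def mult.commute min.coboundedI1)
  ultimately show ?thesis
    unfolding a_def by (intro SNR_md_eqI[of w]) (simp_all add: a_def)
qed

lemma nu_gap_balanced:
  fixes h1 h2 :: "complex ^ 'm"
  defines "\<rho> \<equiv> (norm h1)\<^sup>2 / (norm h2)\<^sup>2" and "t \<equiv> cmod (cinner h1 h2) / (norm h1 * norm h2)"
  assumes indep: "clin_indep2 h1 h2" and "0 < P" and "0 < \<sigma>2"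
    and "cmod (cinner h1 h2) \<le> (norm h1)\<^sup>2" and "cmod (cinner h1 h2) \<le> (norm h2)\<^sup>2"
  shows "nu_gap P \<sigma>2 h1 h2 = 10 * log 10 ((1 + \<rho>) / (1 + \<rho> - 2 * sqrt \<rho> * t))"
proof -
  define n1 n2 c where "n1 = norm h1" and "n2 = norm h2" and "c = cmod (cinner h1 h2)"
  have n: "0 < n1" "0 < n2"
    using clin_indep2_nonzero[OF indep] by (simp_all add: n1_def n2_def)
  have D: "0 < n1\<^sup>2 * n2\<^sup>2 - c\<^sup>2" and e: "0 < n1\<^sup>2 + n2\<^sup>2 - 2 * c"
    using clin_indep2_gram_det_pos[OF indep] clin_indep2_cross_lt[OF indep]
    by (simp_all add: n1_def n2_def c_def)
  have "SNR_md P \<sigma>2 h1 h2 / SNR_zf P \<sigma>2 h1 h2 = (n1\<^sup>2 + n2\<^sup>2) / (n1\<^sup>2 + n2\<^sup>2 - 2 * c)"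
    using SNR_md_balanced[OF indep] SNR_zf_eq[OF indep] assms D e
    by (simp add: n1_def n2_def c_def)
  also have "\<dots> = ((n1\<^sup>2 + n2\<^sup>2) / n2\<^sup>2) / ((n1\<^sup>2 + n2\<^sup>2 - 2 * c) / n2\<^sup>2)"
    using n by simp
  also have "\<dots> = (1 + \<rho>) / (1 + \<rho> - 2 * sqrt \<rho> * t)"
  proof -
    have rho: "\<rho> = n1\<^sup>2 / n2\<^sup>2" and cross: "2 * sqrt \<rho> * t = 2 * c / n2\<^sup>2"
      using n by (simp_all add: \<rho>_def t_def n1_def n2_def c_def real_sqrt_divide power2_eq_square)
    have "1 + \<rho> = (n1\<^sup>2 + n2\<^sup>2) / n2\<^sup>2"
      and "1 + \<rho> - 2 * sqrt \<rho> * t = (n1\<^sup>2 + n2\<^sup>2 - 2 * c) / n2\<^sup>2"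
      unfolding cross unfolding rho using n by (simp_all add: field_simps)
    then show ?thesis by simp
  qed
  finally show ?thesis
    unfolding nu_gap_def by simp
qed

lemma nu_gap_single:
  fixes h1 h2 :: "complex ^ 'm"
  defines "\<rho> \<equiv> (norm h1)\<^sup>2 / (norm h2)\<^sup>2" and "t \<equiv> cmod (cinner h1 h2) / (norm h1 * norm h2)"
  assumes indep: "clin_indep2 h1 h2" and "0 < P" and "0 < \<sigma>2"
    and "(norm h1)\<^sup>2 \<le> cmod (cinner h1 h2)"
  shows "nu_gap P \<sigma>2 h1 h2 = 10 * log 10 ((1 + \<rho>) / (1 - t\<^sup>2))"
proof -
  define n1 n2 c where "n1 = norm h1" and "n2 = norm h2" and "c = cmod (cinner h1 h2)"
  have n: "0 < n1" "0 < n2"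
    using clin_indep2_nonzero[OF indep] by (simp_all add: n1_def n2_def)
  have D: "0 < n1\<^sup>2 * n2\<^sup>2 - c\<^sup>2"
    using clin_indep2_gram_det_pos[OF indep] by (simp add: n1_def n2_def c_def)
  have "SNR_md P \<sigma>2 h1 h2 / SNR_zf P \<sigma>2 h1 h2 = n1\<^sup>2 * (n1\<^sup>2 + n2\<^sup>2) / (n1\<^sup>2 * n2\<^sup>2 - c\<^sup>2)"
    using SNR_md_single[OF clin_indep2_nonzero(1)[OF indep]] SNR_zf_eq[OF indep] assms n D
    by (simp add: n1_def n2_def c_def)
  also have "\<dots> = (1 + \<rho>) / (1 - t\<^sup>2)"
    using n D by (simp add: \<rho>_def t_def n1_def[symmetric] n2_def[symmetric] c_def[symmetric]
        field_simps power2_eq_square)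
  finally show ?thesis
    unfolding nu_gap_def by simp
qed

lemma nu_gap_commute:
  assumes "clin_indep2 h1 h2"
  shows "nu_gap P \<sigma>2 h1 h2 = nu_gap P \<sigma>2 h2 h1"
  using assms clin_indep2_commute[of h1 h2]
  by (simp add: nu_gap_def SNR_md_commute[of P \<sigma>2 h1] SNR_zf_eq cinner_commute[of h2 h1] ac_simps)

lemma cos_herm_angle:
  assumes "h1 \<noteq> 0" and "h2 \<noteq> 0"
  shows "cos (herm_angle h1 h2) = cmod (cinner h1 h2) / (norm h1 * norm h2)"
proof -
  have "-1 \<le> cmod (cinner h1 h2) / (norm h1 * norm h2)"
    by (rule order_trans[of _ 0]) simp_all
  moreover have "cmod (cinner h1 h2) / (norm h1 * norm h2) \<le> 1"
    using norm_cinner_le[of h1 h2] assms by simp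
  ultimately show ?thesis
    unfolding herm_angle_def by (rule cos_arccos)
qed

theorem corollary3:
  fixes h1 h2 :: "complex ^ 'm" and P \<sigma>2 \<rho> \<phi> :: real
  assumes indep: "clin_indep2 h1 h2"
    and P: "P > 0" and \<sigma>: "\<sigma>2 > 0"
    and rho: "\<rho> = (norm h1)\<^sup>2 / (norm h2)\<^sup>2"
    and phi: "\<phi> = herm_angle h1 h2"
  shows "(0 < \<rho> \<and> \<rho> \<le> 1 \<and> 0 \<le> cos \<phi> \<and> cos \<phi> \<le> sqrt \<rho> \<longrightarrow>
           nu_gap P \<sigma>2 h1 h2 = 10 * log 10 ((1 + \<rho>) / (1 + \<rho> - 2 * sqrt \<rho> * cos \<phi>)))
       \<and> (0 < \<rho> \<and> \<rho> \<le> 1 \<and> sqrt \<rho> < cos \<phi> \<and> cos \<phi> < 1 \<longrightarrow>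
           nu_gap P \<sigma>2 h1 h2 = 10 * log 10 ((1 + \<rho>) / (1 - (cos \<phi>)\<^sup>2)))
       \<and> (\<rho> > 1 \<and> 0 \<le> cos \<phi> \<and> cos \<phi> \<le> 1 / sqrt \<rho> \<longrightarrow>
           nu_gap P \<sigma>2 h1 h2 = 10 * log 10 ((1 + \<rho>) / (1 + \<rho> - 2 * sqrt \<rho> * cos \<phi>)))
       \<and> (\<rho> > 1 \<and> 1 / sqrt \<rho> < cos \<phi> \<and> cos \<phi> < 1 \<longrightarrow>
           nu_gap P \<sigma>2 h1 h2 = 10 * log 10 ((1 + 1 / \<rho>) / (1 - (cos \<phi>)\<^sup>2)))"
proof -
  define a b c where "a = (norm h1)\<^sup>2" and "b = (norm h2)\<^sup>2" and "c = cmod (cinner h1 h2)"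
  have nz: "h1 \<noteq> 0" "h2 \<noteq> 0"
    using clin_indep2_nonzero[OF indep] .
  have cos: "cos \<phi> = c / (norm h1 * norm h2)"
    using cos_herm_angle[OF nz] by (simp add: phi c_def)
  have "cos \<phi> \<le> sqrt \<rho> \<longleftrightarrow> c \<le> a" and "cos \<phi> \<le> 1 / sqrt \<rho> \<longleftrightarrow> c \<le> b"
    and "\<rho> \<le> 1 \<longleftrightarrow> a \<le> b"
    using nz by (simp_all add: cos rho a_def b_def real_sqrt_divide field_simps power2_eq_square)
  moreover have "nu_gap P \<sigma>2 h1 h2 = 10 * log 10 ((1 + \<rho>) / (1 + \<rho> - 2 * sqrt \<rho> * cos \<phi>))"
    if "c \<le> a" "c \<le> b"
    using nu_gap_balanced[OF indep P \<sigma>] that by (simp add: cos rho a_def b_def c_def)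
  moreover have "nu_gap P \<sigma>2 h1 h2 = 10 * log 10 ((1 + \<rho>) / (1 - (cos \<phi>)\<^sup>2))"
    if "a \<le> c"
    using nu_gap_single[OF indep P \<sigma>] that by (simp add: cos rho a_def c_def)
  moreover have "nu_gap P \<sigma>2 h1 h2 = 10 * log 10 ((1 + 1 / \<rho>) / (1 - (cos \<phi>)\<^sup>2))"
    if "b \<le> c"
    using nu_gap_commute[OF indep] that
      nu_gap_single[OF clin_indep2_commute[THEN iffD1, OF indep] P \<sigma>]
    by (simp add: cos rho b_def c_def cinner_commute[of h2 h1] mult.commute)
  ultimately show ?thesis
    by auto
qed

end
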